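(* Let $\mathbb{X},\mathbb{Y}$ be real Banach spaces, $x\in S_{\mathbb{X}}$, $y\in S_{\mathbb{Y}}$. Then: (i) If $(x,y)$ is a CPP then $(x,y)$ is a weak CPP; the converse fails in general: in $\ell_\infty^2$, $((1,1),(1,-1))$ is a weak CPP but not a CPP. (ii) If $\mathbb{H}$ is a real Hilbert space, then for any $x,y\in S_{\mathbb{H}}$ the pair $(x,y)$ is a CPP, and $(r,1)$ is a CPP constant for it for every $r>0$. (iii) For every $x\in S_{\mathbb{X}}$, $(x,x)$ is a weak CPP; but $(x,x)$ need not be a CPP: in $\ell_\infty^2$, $((1,1),(1,1))$ is not a CPP. (iv) A pair need not be a weak CPP: in $\ell_\infty^2$, $((1,0),(1,1/2))$ is a weak CPP, but $((1,0),(1,1))$ is not a weak CPP. (v) If $(r_0,\mu_0)$ is a weak CPP constant (respectively, a CPP constant) for $(x,y)$, then $(r,\mu)$ is a weak CPP constant (respectively, a CPP constant) for $(x,y)$ for all $0<r\le r_0$ and $0<\mu\le\mu_0$. (vi) If $(x,y)$ is a CPP and $x$ is not an extreme point of $B_{\mathbb{X}}$, then $y$ is not an extreme point of $B_{\mathbb{Y}}$. The converse fails: in $\ell_\infty^2$, $((1,1),(1,0))$ is a CPP, $(1,0)$ is not an extreme point of $B_{\ell_\infty^2}$, while $(1,1)$ is an extreme point of $B_{\ell_\infty^2}$.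
   Context: All Banach spaces are real and of dimension greater than $1$. $B_{\mathbb{X}}$ and $S_{\mathbb{X}}$ denote the closed unit ball and unit sphere; $B(x,r)=\{u:\|u-x\|<r\}$. For $x,y\in\mathbb{X}$, $x\perp_B y$ (Birkhoff–James orthogonality) means $\|x+\lambda y\|\ge\|x\|$ for all $\lambda\in\mathbb{R}$, and $x^{\perp}=\{y\in\mathbb{X}: x\perp_B y\}$. For $x\in S_{\mathbb{X}}$, $y\in S_{\mathbb{Y}}$: $(x,y)$ is a weak CPP (weakly compatible point pair) if there exist $z\in x^\perp\cap S_{\mathbb{X}}$, $w\in y^\perp\cap S_{\mathbb{Y}}$ and constants $r>0,\mu>0$ such that for all $a,b\in\mathbb{R}$, $ax+bz\in B(x,r)\cap S_{\mathbb{X}}$ implies $\|ay+b\mu w\|\le 1$; any such $(r,\mu)$ is a weak CPP constant for $(x,y)$. $(x,y)$ is a CPP (compatible point pair) if there exist $r>0,\mu>0$ such that for all $z\in x^\perp\cap S_{\mathbb{X}}$, all $w\in y^\perp\cap S_{\mathbb{Y}}$ and all $a,b\in\mathbb{R}$, $ax+bz\in B(x,r)\cap S_{\mathbb{X}}$ implies $\|ay+b\mu w\|\le1$; any such $(r,\mu)$ is a CPP constant for $(x,y)$. $\ell_\infty^2$ is $\mathbb{R}^2$ with the max norm. *)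

theory Defs
  imports "HOL-Analysis.Analysis"
begin

text \<open>All notions are stated for a real vector space together with an explicit norm
  function N (for genuine normed spaces N = norm; for l_infinity^2 we use the max norm
  on real * real).\<close>

definition bj_orth :: "('a::real_vector \<Rightarrow> real) \<Rightarrow> 'a \<Rightarrow> 'a \<Rightarrow> bool" where
  "bj_orth N x y \<longleftrightarrow> (\<forall>l::real. N (x + l *\<^sub>R y) \<ge> N x)"

definition weak_cpp_const ::
  "('a::real_vector \<Rightarrow> real) \<Rightarrow> ('b::real_vector \<Rightarrow> real) \<Rightarrow> 'a \<Rightarrow> 'b \<Rightarrow> real \<Rightarrow> real \<Rightarrow> bool" where
  "weak_cpp_const NX NY x y r m \<longleftrightarrow> r > 0 \<and> m > 0 \<and>
     (\<exists>z w. bj_orth NX x z \<and> NX z = 1 \<and> bj_orth NY y w \<and> NY w = 1 \<and>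
        (\<forall>a b::real. NX (a *\<^sub>R x + b *\<^sub>R z - x) < r \<and> NX (a *\<^sub>R x + b *\<^sub>R z) = 1
            \<longrightarrow> NY (a *\<^sub>R y + (b * m) *\<^sub>R w) \<le> 1))"

definition weak_cpp ::
  "('a::real_vector \<Rightarrow> real) \<Rightarrow> ('b::real_vector \<Rightarrow> real) \<Rightarrow> 'a \<Rightarrow> 'b \<Rightarrow> bool" where
  "weak_cpp NX NY x y \<longleftrightarrow> (\<exists>r m. weak_cpp_const NX NY x y r m)"

definition cpp_const ::
  "('a::real_vector \<Rightarrow> real) \<Rightarrow> ('b::real_vector \<Rightarrow> real) \<Rightarrow> 'a \<Rightarrow> 'b \<Rightarrow> real \<Rightarrow> real \<Rightarrow> bool" where
  "cpp_const NX NY x y r m \<longleftrightarrow> r > 0 \<and> m > 0 \<and>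
     (\<forall>z w. bj_orth NX x z \<and> NX z = 1 \<and> bj_orth NY y w \<and> NY w = 1 \<longrightarrow>
        (\<forall>a b::real. NX (a *\<^sub>R x + b *\<^sub>R z - x) < r \<and> NX (a *\<^sub>R x + b *\<^sub>R z) = 1
            \<longrightarrow> NY (a *\<^sub>R y + (b * m) *\<^sub>R w) \<le> 1))"

definition cpp ::
  "('a::real_vector \<Rightarrow> real) \<Rightarrow> ('b::real_vector \<Rightarrow> real) \<Rightarrow> 'a \<Rightarrow> 'b \<Rightarrow> bool" where
  "cpp NX NY x y \<longleftrightarrow> (\<exists>r m. cpp_const NX NY x y r m)"

definition linf2_norm :: "real \<times> real \<Rightarrow> real" where
  "linf2_norm p = max \<bar>fst p\<bar> \<bar>snd p\<bar>"

definition dim_gt_one :: "'a::real_vector itself \<Rightarrow> bool" where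
  "dim_gt_one (T :: 'a itself) \<longleftrightarrow> (\<exists>u v :: 'a. u \<noteq> v \<and> independent {u, v})"

end

theory Submission
  imports Defs
begin

(* In dimension at least two every unit vector y has a Birkhoff-James orthogonal unit vector:
   a supporting line 1 + c t of the convex function t -> ||y + t u|| (u not parallel to y)
   yields the direction u - c y. So CPP constants are weak CPP constants, and (x, x) is a weak
   CPP with w = z. In an inner product space Birkhoff-James orthogonality is orthogonality, so
   a x + b z and a y + b w both have norm sqrt (a^2 + b^2). Decreasing mu keeps a y + b mu w on
   the segment from a y to a y + b mu0 w, inside the unit ball. If x is interior to a segment
   of the unit sphere, the direction z of that segment is orthogonal to x and short moves along
   z stay on the sphere; the CPP condition then places y +- b mu w in the ball, so y is not
   extreme. In l_infinity^2 the vectors orthogonal to (1,0) are the vertical ones and those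
   orthogonal to (1,1) have coordinates of opposite sign; the examples are computations with
   these directions. *)

lemma bj_orth_scaleR_right:
  assumes "bj_orth N x z"
  shows "bj_orth N x (c *\<^sub>R z)"
  using assms unfolding bj_orth_def by (metis scaleR_scaleR)

lemma abs_mult_norm_le_if_bj_orth:
  fixes x z :: "'a::real_normed_vector"
  assumes "bj_orth norm x z"
  shows "\<bar>a\<bar> * norm x \<le> norm (a *\<^sub>R x + b *\<^sub>R z)"
proof (cases "a = 0")
  case False
  have "a *\<^sub>R x + b *\<^sub>R z = a *\<^sub>R (x + (b / a) *\<^sub>R z)"
    using False by (simp add: algebra_simps)
  moreover have "norm x \<le> norm (x + (b / a) *\<^sub>R z)"
    using assms unfolding bj_orth_def by blast
  ultimately show ?thesis by (simp add: mult_left_mono)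
qed simp

lemma norm_supporting_slope:
  fixes y u :: "'a::real_normed_vector"
  assumes "norm y = 1"
  obtains c where "\<And>t. 1 + c * t \<le> norm (y + t *\<^sub>R u)"
proof -
  define \<phi> where "\<phi> t = norm (y + t *\<^sub>R u)" for t
  \<comment> \<open>convexity of \<open>\<phi>\<close> on \<open>[-s, t]\<close>: left difference quotients at 0 are below right ones\<close>
  have slopes: "t * (1 - \<phi> (-s)) \<le> s * (\<phi> t - 1)" if "s > 0" "t > 0" for s t
  proof -
    have "(s + t) *\<^sub>R y = t *\<^sub>R (y - s *\<^sub>R u) + s *\<^sub>R (y + t *\<^sub>R u)"
      by (simp add: algebra_simps)
    then have "norm ((s + t) *\<^sub>R y) \<le> t * \<phi> (-s) + s * \<phi> t"
      using that norm_triangle_ineq[of "t *\<^sub>R (y - s *\<^sub>R u)" "s *\<^sub>R (y + t *\<^sub>R u)"]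
      by (simp add: \<phi>_def)
    moreover have "norm ((s + t) *\<^sub>R y) = s + t" using that assms by simp
    ultimately show ?thesis by (simp add: algebra_simps)
  qed
  define L where "L = {(1 - \<phi> (-s)) / s | s. s > 0}"
  have left_le_right: "l \<le> (\<phi> t - 1) / t" if "l \<in> L" "t > 0" for l t
  proof -
    obtain s where s: "s > 0" "l = (1 - \<phi> (-s)) / s" using \<open>l \<in> L\<close> L_def by blast
    then have "s * l = 1 - \<phi> (-s)" by simp
    then have "s * (t * l) = t * (1 - \<phi> (-s))" by (simp only: mult.left_commute[of s t])
    then have "s * (t * l) \<le> s * (\<phi> t - 1)"
      using slopes[OF s(1) \<open>t > 0\<close>] by linarith
    then have "t * l \<le> \<phi> t - 1" using s(1) by simp
    then show ?thesis using \<open>t > 0\<close> by (simp add: field_simps)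
  qed
  have "L \<noteq> {}" unfolding L_def using zero_less_one by blast
  moreover have "bdd_above L"
    using left_le_right[of _ 1] by (intro bdd_aboveI[of _ "\<phi> 1 - 1"]) simp
  ultimately have Sup_L: "Sup L \<le> (\<phi> t - 1) / t" if "t > 0" for t
    using left_le_right that by (intro cSup_least) blast+
  have "1 + Sup L * t \<le> \<phi> t" for t
  proof (cases t "0::real" rule: linorder_cases)
    case less
    have "(1 - \<phi> (- (-t))) / (-t) \<in> L" unfolding L_def using less by (intro CollectI exI[of _ "-t"]) simp
    then have "(1 - \<phi> t) / (-t) \<in> L" by simp
    then have "(1 - \<phi> t) / (-t) \<le> Sup L" using \<open>bdd_above L\<close> by (rule cSup_upper)
    then show ?thesis using less by (simp add: field_simps)
  next
    case greater
    then show ?thesis using Sup_L[OF greater] by (simp add: field_simps)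
  qed (simp add: \<phi>_def assms)
  then show thesis using that unfolding \<phi>_def by blast
qed

lemma bj_orth_exists_nonparallel:
  fixes y u :: "'a::real_normed_vector"
  assumes y: "norm y = 1" and u: "\<And>k. u \<noteq> k *\<^sub>R y"
  obtains w where "bj_orth norm y w" "norm w = 1"
proof -
  obtain c where c: "\<And>t. 1 + c * t \<le> norm (y + t *\<^sub>R u)"
    using norm_supporting_slope[OF y] by blast
  have homogeneous: "\<mu> + c * t \<le> norm (\<mu> *\<^sub>R y + t *\<^sub>R u)" for \<mu> t
  proof (cases "\<mu> > 0")
    case True
    have "\<mu> *\<^sub>R y + t *\<^sub>R u = \<mu> *\<^sub>R (y + (t / \<mu>) *\<^sub>R u)"
      using True by (simp add: algebra_simps)
    then have "norm (\<mu> *\<^sub>R y + t *\<^sub>R u) = \<mu> * norm (y + (t / \<mu>) *\<^sub>R u)"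
      using True by simp
    moreover have "\<mu> * (1 + c * (t / \<mu>)) = \<mu> + c * t"
      using True by (simp add: field_simps)
    ultimately show ?thesis
      using c[of "t / \<mu>"] True by (metis mult_left_mono less_imp_le)
  next
    case False
    have "norm (y + t *\<^sub>R u) - norm ((1 - \<mu>) *\<^sub>R y)
        \<le> norm ((y + t *\<^sub>R u) - (1 - \<mu>) *\<^sub>R y)"
      by (rule norm_triangle_ineq2)
    also have "(y + t *\<^sub>R u) - (1 - \<mu>) *\<^sub>R y = \<mu> *\<^sub>R y + t *\<^sub>R u"
      by (simp add: algebra_simps)
    finally show ?thesis using c[of t] False y by simp
  qed
  define w0 where "w0 = u - c *\<^sub>R y"
  have "w0 \<noteq> 0" using u unfolding w0_def by auto
  have "norm (y + l *\<^sub>R w0) \<ge> 1" for l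
    using homogeneous[of "1 - l * c" l] unfolding w0_def by (simp add: algebra_simps)
  then have "bj_orth norm y w0" unfolding bj_orth_def y by blast
  then show thesis
    using that[of "(1 / norm w0) *\<^sub>R w0"] \<open>w0 \<noteq> 0\<close> bj_orth_scaleR_right by auto
qed

lemma dim_gt_one_ex_nonparallel:
  fixes y :: "'a::real_vector"
  assumes "dim_gt_one TYPE('a)"
  obtains u where "\<And>k. u \<noteq> k *\<^sub>R y"
proof (rule ccontr)
  assume "\<not> thesis"
  then have multiple: "\<exists>k. p = k *\<^sub>R y" for p :: 'a using that by blast
  obtain u v :: 'a where "u \<noteq> v" "independent {u, v}"
    using assms unfolding dim_gt_one_def by blast
  moreover obtain a b where "u = a *\<^sub>R y" "v = b *\<^sub>R y" using multiple by metis
  ultimately have "a \<noteq> 0" "v = (b / a) *\<^sub>R u"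
    using real_vector.dependent_zero[of "{u, v}"] by auto
  then have "v \<in> span ({u, v} - {v})" using \<open>u \<noteq> v\<close> by (simp add: span_base span_mul insert_Diff_if)
  then show False using \<open>independent {u, v}\<close> unfolding real_vector.dependent_def by blast
qed

lemma bj_orth_exists_unit:
  fixes y :: "'a::real_normed_vector"
  assumes "norm y = 1" and "dim_gt_one TYPE('a)"
  obtains w where "bj_orth norm y w" "norm w = 1"
  using dim_gt_one_ex_nonparallel[OF assms(2), of y] bj_orth_exists_nonparallel[OF assms(1)]
  by metis

lemma norm_add_scaleR_le_one:
  fixes p v :: "'a::real_normed_vector"
  assumes "norm p \<le> 1" "norm (p + v) \<le> 1" "0 \<le> \<theta>" "\<theta> \<le> 1"
  shows "norm (p + \<theta> *\<^sub>R v) \<le> 1"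
proof -
  have "(1 - \<theta>) *\<^sub>R p + \<theta> *\<^sub>R (p + v) \<in> cball 0 1"
    using assms by (intro convexD[OF convex_cball]) auto
  moreover have "(1 - \<theta>) *\<^sub>R p + \<theta> *\<^sub>R (p + v) = p + \<theta> *\<^sub>R v"
    by (simp add: algebra_simps)
  ultimately show ?thesis by simp
qed

lemma compatible_bound_mono:
  fixes x z :: "'a::real_normed_vector" and y w :: "'b::real_normed_vector"
  assumes "bj_orth norm x z" "norm x = 1" "norm y = 1"
    and "norm (a *\<^sub>R x + b *\<^sub>R z) = 1" "norm (a *\<^sub>R y + (b * m0) *\<^sub>R w) \<le> 1"
    and "0 < m" "m \<le> m0"
  shows "norm (a *\<^sub>R y + (b * m) *\<^sub>R w) \<le> 1"
proof -
  have "norm (a *\<^sub>R y) \<le> 1"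
    using abs_mult_norm_le_if_bj_orth[OF assms(1), of a b] assms(2-4) by simp
  moreover have "(b * m) *\<^sub>R w = (m / m0) *\<^sub>R ((b * m0) *\<^sub>R w)"
    using assms(6,7) by simp
  ultimately show ?thesis
    using norm_add_scaleR_le_one[of "a *\<^sub>R y" "(b * m0) *\<^sub>R w" "m / m0"] assms(5-7)
    by (simp only:) simp
qed

lemma weak_cpp_const_mono:
  fixes x :: "'a::real_normed_vector" and y :: "'b::real_normed_vector"
  assumes "weak_cpp_const norm norm x y r0 m0" "norm x = 1" "norm y = 1"
    and "0 < r" "r \<le> r0" "0 < m" "m \<le> m0"
  shows "weak_cpp_const norm norm x y r m"
proof -
  obtain z w where zw: "bj_orth norm x z" "norm z = 1" "bj_orth norm y w" "norm w = 1"
    and bound: "\<And>a b. norm (a *\<^sub>R x + b *\<^sub>R z - x) < r0 \<Longrightarrow> norm (a *\<^sub>R x + b *\<^sub>R z) = 1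
      \<Longrightarrow> norm (a *\<^sub>R y + (b * m0) *\<^sub>R w) \<le> 1"
    using assms(1) unfolding weak_cpp_const_def by blast
  have "norm (a *\<^sub>R y + (b * m) *\<^sub>R w) \<le> 1"
    if "norm (a *\<^sub>R x + b *\<^sub>R z - x) < r" "norm (a *\<^sub>R x + b *\<^sub>R z) = 1" for a b
  proof -
    have "norm (a *\<^sub>R y + (b * m0) *\<^sub>R w) \<le> 1" using that assms(5) by (intro bound) auto
    then show ?thesis by (rule compatible_bound_mono[OF zw(1) assms(2,3) that(2) _ assms(6,7)])
  qed
  then show ?thesis unfolding weak_cpp_const_def using zw assms(4,6) by blast
qed

lemma cpp_const_mono:
  fixes x :: "'a::real_normed_vector" and y :: "'b::real_normed_vector"
  assumes "cpp_const norm norm x y r0 m0" "norm x = 1" "norm y = 1"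
    and "0 < r" "r \<le> r0" "0 < m" "m \<le> m0"
  shows "cpp_const norm norm x y r m"
  using assms compatible_bound_mono[OF _ assms(2,3)] unfolding cpp_const_def
  by (smt (verit))

lemma orthogonal_if_bj_orth:
  fixes x z :: "'a::real_inner"
  assumes "bj_orth norm x z"
  shows "orthogonal x z"
proof (cases "z = 0")
  case False
  \<comment> \<open>\<open>x - c z\<close> is the orthogonal projection of \<open>x\<close> onto \<open>z\<^sup>\<bottom>\<close>\<close>
  define c where "c = inner x z / inner z z"
  have "inner z z > 0" using False by simp
  have "c * inner z z = inner x z" using \<open>inner z z > 0\<close> unfolding c_def by simp
  moreover have "(norm (x + (-c) *\<^sub>R z))\<^sup>2
      = (norm x)\<^sup>2 - 2 * c * inner x z + c * (c * inner z z)"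
    unfolding power2_norm_eq_inner
    by (simp add: inner_diff_left inner_diff_right inner_commute algebra_simps)
  ultimately have "(norm (x + (-c) *\<^sub>R z))\<^sup>2 = (norm x)\<^sup>2 - c * inner x z" by simp
  moreover have "norm x \<le> norm (x + (-c) *\<^sub>R z)"
    using assms unfolding bj_orth_def by blast
  ultimately have "c * inner x z \<le> 0"
    using power_mono[of "norm x" "norm (x + (-c) *\<^sub>R z)" 2] by simp
  then have "(inner x z)\<^sup>2 \<le> 0"
    using \<open>inner z z > 0\<close> unfolding c_def by (simp add: power2_eq_square divide_le_0_iff)
  then show ?thesis unfolding orthogonal_def by simp
qed (simp add: orthogonal_def)

lemma norm_orthonormal_combination:
  fixes x z :: "'a::real_inner"
  assumes "orthogonal x z" "norm x = 1" "norm z = 1"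
  shows "norm (a *\<^sub>R x + b *\<^sub>R z) = sqrt (a\<^sup>2 + b\<^sup>2)"
proof -
  have "(norm (a *\<^sub>R x + b *\<^sub>R z))\<^sup>2 = a\<^sup>2 + b\<^sup>2"
    using assms norm_add_Pythagorean[of "a *\<^sub>R x" "b *\<^sub>R z"]
    by (simp add: orthogonal_clauses power_mult_distrib)
  then show ?thesis by (simp add: real_sqrt_unique)
qed

lemma cpp_const_inner_space:
  fixes x y :: "'a::real_inner"
  assumes "norm x = 1" "norm y = 1" "r > 0"
  shows "cpp_const norm norm x y r 1"
  unfolding cpp_const_def
proof (intro conjI allI impI)
  fix z w a b
  assume zw: "bj_orth norm x z \<and> norm z = 1 \<and> bj_orth norm y w \<and> norm w = 1"
    and "norm (a *\<^sub>R x + b *\<^sub>R z - x) < r \<and> norm (a *\<^sub>R x + b *\<^sub>R z) = 1"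
  then have "norm (a *\<^sub>R x + b *\<^sub>R z) = 1" by blast
  moreover have "norm (a *\<^sub>R x + b *\<^sub>R z) = sqrt (a\<^sup>2 + b\<^sup>2)"
    using zw assms(1) orthogonal_if_bj_orth by (intro norm_orthonormal_combination) auto
  moreover have "norm (a *\<^sub>R y + b *\<^sub>R w) = sqrt (a\<^sup>2 + b\<^sup>2)"
    using zw assms(2) orthogonal_if_bj_orth by (intro norm_orthonormal_combination) auto
  ultimately show "norm (a *\<^sub>R y + (b * 1) *\<^sub>R w) \<le> 1" by simp
qed (use assms in auto)

lemma weak_cpp_if_cpp:
  fixes x :: "'a::real_normed_vector" and y :: "'b::real_normed_vector"
  assumes "norm x = 1" "norm y = 1" "dim_gt_one TYPE('a)" "dim_gt_one TYPE('b)"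
    and "cpp norm norm x y"
  shows "weak_cpp norm norm x y"
proof -
  obtain r m where "cpp_const norm norm x y r m" using assms(5) unfolding cpp_def by blast
  moreover obtain z where "bj_orth norm x z" "norm z = 1"
    using bj_orth_exists_unit assms(1,3) by blast
  moreover obtain w where "bj_orth norm y w" "norm w = 1"
    using bj_orth_exists_unit assms(2,4) by blast
  ultimately have "weak_cpp_const norm norm x y r m"
    unfolding weak_cpp_const_def cpp_const_def by blast
  then show ?thesis unfolding weak_cpp_def by blast
qed

lemma weak_cpp_const_self:
  fixes N :: "'a::real_vector \<Rightarrow> real"
  assumes "bj_orth N x z" "N z = 1" "r > 0"
  shows "weak_cpp_const N N x x r 1"
  using assms unfolding weak_cpp_const_def by (intro conjI exI[of _ z]) auto

lemma weak_cpp_self: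
  fixes x :: "'a::real_normed_vector"
  assumes "norm x = 1" "dim_gt_one TYPE('a)"
  shows "weak_cpp norm norm x x"
  using bj_orth_exists_unit[OF assms] weak_cpp_const_self[of norm x _ 1]
  unfolding weak_cpp_def by auto

lemma flat_direction_if_not_extreme_point:
  fixes x :: "'a::real_normed_vector"
  assumes "norm x = 1" "\<not> x extreme_point_of cball 0 1"
  obtains z \<delta> where "norm z = 1" "\<delta> > 0" "\<And>s. \<bar>s\<bar> \<le> \<delta> \<Longrightarrow> norm (x + s *\<^sub>R z) = 1"
proof -
  obtain p q where pq: "p \<in> cball 0 1" "q \<in> cball 0 1" "x \<in> open_segment p q"
    using assms unfolding extreme_point_of_def by auto
  then obtain u where u: "p \<noteq> q" "0 < u" "u < 1" "x = (1 - u) *\<^sub>R p + u *\<^sub>R q"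
    unfolding in_segment by blast
  define d where "d = q - p"
  define \<delta> where "\<delta> = min u (1 - u)"
  have le1: "norm (x + s *\<^sub>R d) \<le> 1" if "\<bar>s\<bar> \<le> \<delta>" for s
  proof -
    have "(1 - (u + s)) *\<^sub>R p + (u + s) *\<^sub>R q \<in> cball 0 1"
      using that pq u unfolding \<delta>_def by (intro convexD[OF convex_cball]) auto
    moreover have "x + s *\<^sub>R d = (1 - (u + s)) *\<^sub>R p + (u + s) *\<^sub>R q"
      unfolding u(4) d_def by (simp add: algebra_simps)
    ultimately show ?thesis by simp
  qed
  \<comment> \<open>\<open>x\<close> is the midpoint of \<open>x \<plusminus> s d\<close>, so neither of them can lie strictly inside the ball\<close>
  have flat: "norm (x + s *\<^sub>R d) = 1" if "\<bar>s\<bar> \<le> \<delta>" for s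
  proof -
    have "2 = norm ((x + s *\<^sub>R d) + (x + (-s) *\<^sub>R d))"
      using assms(1) by (simp add: algebra_simps flip: scaleR_2)
    then have "2 \<le> norm (x + s *\<^sub>R d) + norm (x + (-s) *\<^sub>R d)"
      by (metis norm_triangle_ineq)
    then show ?thesis using le1[of s] le1[of "-s"] that by simp
  qed
  have "d \<noteq> 0" "\<delta> > 0" using u unfolding d_def \<delta>_def by auto
  show thesis
  proof (rule that[of "(1 / norm d) *\<^sub>R d" "\<delta> * norm d"])
    fix s assume "\<bar>s\<bar> \<le> \<delta> * norm d"
    then have "\<bar>s / norm d\<bar> \<le> \<delta>" using \<open>d \<noteq> 0\<close> by (simp add: divide_simps abs_div)
    then show "norm (x + s *\<^sub>R (1 / norm d) *\<^sub>R d) = 1" using flat by simp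
  qed (use \<open>d \<noteq> 0\<close> \<open>\<delta> > 0\<close> in auto)
qed

lemma bj_orth_if_flat:
  fixes x z :: "'a::real_normed_vector"
  assumes "\<delta> > 0" and flat: "\<And>s. \<bar>s\<bar> \<le> \<delta> \<Longrightarrow> norm (x + s *\<^sub>R z) = norm x"
  shows "bj_orth norm x z"
  unfolding bj_orth_def
proof
  fix l :: real
  show "norm x \<le> norm (x + l *\<^sub>R z)"
  proof (cases "\<bar>l\<bar> \<le> \<delta>")
    case False
    define \<theta> where "\<theta> = \<delta> / \<bar>l\<bar>"
    have \<theta>: "0 < \<theta>" "\<theta> \<le> 1" "\<bar>\<theta> * l\<bar> = \<delta>"
      using False assms(1) unfolding \<theta>_def by (auto simp: abs_mult)
    have "x + (\<theta> * l) *\<^sub>R z = (1 - \<theta>) *\<^sub>R x + \<theta> *\<^sub>R (x + l *\<^sub>R z)"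
      by (simp add: algebra_simps)
    then have "norm x \<le> (1 - \<theta>) * norm x + \<theta> * norm (x + l *\<^sub>R z)"
      using flat[of "\<theta> * l"] \<theta> norm_triangle_ineq[of "(1 - \<theta>) *\<^sub>R x" "\<theta> *\<^sub>R (x + l *\<^sub>R z)"]
      by simp
    then have "\<theta> * norm x \<le> \<theta> * norm (x + l *\<^sub>R z)" by (simp add: algebra_simps)
    then show ?thesis using \<theta>(1) by simp
  qed (use flat in simp)
qed

lemma not_extreme_point_if_symmetric:
  assumes "y - v \<in> S" "y + v \<in> S" "v \<noteq> 0"
  shows "\<not> y extreme_point_of S"
proof -
  have "(y + v) - (y - v) = 2 *\<^sub>R v" by (simp add: scaleR_2)
  then have "y - v \<noteq> y + v" using assms(3) by (metis diff_self scaleR_eq_0_iff zero_neq_numeral)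
  moreover have "midpoint (y - v) (y + v) = y" unfolding midpoint_def by (simp flip: scaleR_2)
  ultimately show ?thesis
    using assms midpoint_in_open_segment unfolding extreme_point_of_def by metis
qed

lemma not_extreme_point_if_cpp:
  fixes x :: "'a::real_normed_vector" and y :: "'b::real_normed_vector"
  assumes "norm x = 1" "norm y = 1" "dim_gt_one TYPE('b)" "cpp norm norm x y"
    and "\<not> x extreme_point_of cball 0 1"
  shows "\<not> y extreme_point_of cball 0 1"
proof -
  obtain z \<delta> where z: "norm z = 1" and "\<delta> > 0"
    and flat: "\<And>s. \<bar>s\<bar> \<le> \<delta> \<Longrightarrow> norm (x + s *\<^sub>R z) = 1"
    using flat_direction_if_not_extreme_point assms(1,5) by blast
  have "bj_orth norm x z" using \<open>\<delta> > 0\<close> flat assms(1) by (intro bj_orth_if_flat) auto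
  obtain r m where cpp: "cpp_const norm norm x y r m" using assms(4) unfolding cpp_def by blast
  obtain w where w: "bj_orth norm y w" "norm w = 1" using bj_orth_exists_unit assms(2,3) by blast
  define b where "b = min r \<delta> / 2"
  have "b > 0" "m > 0" using cpp \<open>\<delta> > 0\<close> unfolding b_def cpp_const_def by auto
  have "norm (y + (c * m) *\<^sub>R w) \<le> 1" if "\<bar>c\<bar> = b" for c
  proof -
    have "norm (1 *\<^sub>R x + c *\<^sub>R z - x) < r" "norm (1 *\<^sub>R x + c *\<^sub>R z) = 1"
      using that z flat \<open>b > 0\<close> unfolding b_def by auto
    then show ?thesis
      using cpp \<open>bj_orth norm x z\<close> z w unfolding cpp_const_def by fastforce
  qed
  from this[of b] this[of "-b"] have "y + (b * m) *\<^sub>R w \<in> cball 0 1" "y - (b * m) *\<^sub>R w \<in> cball 0 1"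
    using \<open>b > 0\<close> by auto
  moreover have "(b * m) *\<^sub>R w \<noteq> 0" using \<open>b > 0\<close> \<open>m > 0\<close> w(2) by auto
  ultimately show ?thesis by (intro not_extreme_point_if_symmetric)
qed

lemma linf2_norm_Pair [simp]: "linf2_norm (a, b) = max \<bar>a\<bar> \<bar>b\<bar>"
  by (simp add: linf2_norm_def)

lemma bj_orth_linf2_e1D:
  assumes "bj_orth linf2_norm (1, 0) z"
  shows "fst z = 0"
proof (rule ccontr)
  assume "fst z \<noteq> 0"
  define c where "c = snd z / fst z"
  have "(1 / fst z) *\<^sub>R z = (1, c)"
    using \<open>fst z \<noteq> 0\<close> unfolding c_def by (simp add: prod_eq_iff)
  then have "bj_orth linf2_norm (1, 0) (1, c)"
    using bj_orth_scaleR_right[OF assms] by metis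
  \<comment> \<open>but \<open>(1,0) - (1,c)/(1 + 2|c|)\<close> lies in the open unit ball\<close>
  then have "linf2_norm (1, 0) \<le> linf2_norm ((1, 0) + (- 1 / (1 + 2 * \<bar>c\<bar>)) *\<^sub>R (1, c))"
    unfolding bj_orth_def by blast
  then have "1 \<le> max (2 * \<bar>c\<bar> / (1 + 2 * \<bar>c\<bar>)) (\<bar>c\<bar> / (1 + 2 * \<bar>c\<bar>))"
    by (simp add: field_simps abs_mult)
  moreover have "1 + 2 * \<bar>c\<bar> > 0" by simp
  ultimately show False by (simp add: le_max_iff_disj divide_simps)
qed

lemma bj_orth_linf2_diagD:
  assumes "bj_orth linf2_norm (1, 1) z"
  shows "fst z * snd z \<le> 0"
proof (rule ccontr)
  obtain z1 z2 where z: "z = (z1, z2)" by (cases z)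
  assume "\<not> fst z * snd z \<le> 0"
  then have "(z1 > 0 \<and> z2 > 0) \<or> (z1 < 0 \<and> z2 < 0)"
    using z by (simp add: not_le zero_less_mult_iff)
  \<comment> \<open>the step \<open>l = -1/(z1 + z2)\<close> moves \<open>(1,1)\<close> to \<open>(z2, z1)/(z1 + z2)\<close>, inside the open unit ball\<close>
  then have "z2 / (z1 + z2) \<in> {0<..<1}" "z1 / (z1 + z2) \<in> {0<..<1}" "z1 + z2 \<noteq> 0"
    by (auto simp: divide_simps)
  moreover have "(1, 1) + (-1 / (z1 + z2)) *\<^sub>R z = (z2 / (z1 + z2), z1 / (z1 + z2))"
    using \<open>z1 + z2 \<noteq> 0\<close> z by (simp add: prod_eq_iff field_simps)
  moreover have "1 \<le> linf2_norm ((1, 1) + (-1 / (z1 + z2)) *\<^sub>R z)"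
    using assms unfolding bj_orth_def by (metis linf2_norm_Pair abs_one max.idem)
  ultimately show False by (simp add: le_max_iff_disj del: abs_divide)
qed

lemma weak_cpp_linf2_diag_antidiag: "weak_cpp linf2_norm linf2_norm (1, 1) (1, -1)"
proof -
  have "weak_cpp_const linf2_norm linf2_norm (1, 1) (1, -1) 1 1"
    unfolding weak_cpp_const_def bj_orth_def by (intro conjI exI[of _ "(-1, 0)"]) auto
  then show ?thesis unfolding weak_cpp_def by blast
qed

lemma not_cpp_linf2_diag:
  assumes "\<bar>s\<bar> = 1"
  shows "\<not> cpp linf2_norm linf2_norm (1, 1) (1, s)"
proof
  assume "cpp linf2_norm linf2_norm (1, 1) (1, s)"
  then obtain r m where cpp: "cpp_const linf2_norm linf2_norm (1, 1) (1, s) r m"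
    unfolding cpp_def by blast
  have "r > 0" "m > 0" using cpp unfolding cpp_const_def by auto
  have z: "bj_orth linf2_norm (1, 1) (-1, 0)" unfolding bj_orth_def by auto
  have w: "bj_orth linf2_norm (1, s) (1, 0)" unfolding bj_orth_def using assms by auto
  define b where "b = min r 1 / 2"
  have "b > 0" "b < r" "b \<le> 1 / 2" using \<open>r > 0\<close> unfolding b_def by auto
  \<comment> \<open>\<open>(1,1) - b(1,0)\<close> is still on the sphere, but \<open>(1,s) + bm(1,0)\<close> leaves the ball\<close>
  then have "linf2_norm (1 *\<^sub>R (1, 1) + b *\<^sub>R (-1, 0) - (1, 1)) < r"
    "linf2_norm (1 *\<^sub>R (1, 1) + b *\<^sub>R (-1, 0)) = 1" by auto
  then have "linf2_norm (1 *\<^sub>R (1, s) + (b * m) *\<^sub>R (1, 0)) \<le> 1"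
    using cpp z w unfolding cpp_const_def by fastforce
  then show False using mult_pos_pos[OF \<open>b > 0\<close> \<open>m > 0\<close>] by simp
qed

lemma weak_cpp_linf2_e1_half: "weak_cpp linf2_norm linf2_norm (1, 0) (1, 1 / 2)"
proof -
  have "weak_cpp_const linf2_norm linf2_norm (1, 0) (1, 1 / 2) (1 / 2) 1"
    unfolding weak_cpp_const_def bj_orth_def
  proof (intro conjI exI[of _ "(0, 1)"] allI impI)
    fix a b :: real
    assume "linf2_norm (a *\<^sub>R (1, 0) + b *\<^sub>R (0, 1) - (1, 0)) < 1 / 2 \<and>
      linf2_norm (a *\<^sub>R (1, 0) + b *\<^sub>R (0, 1)) = 1"
    \<comment> \<open>near \<open>(1,0)\<close> the unit sphere is the vertical edge \<open>{1} \<times> [-1, 1]\<close>\<close>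
    then have "max \<bar>a - 1\<bar> \<bar>b\<bar> < 1 / 2" "max \<bar>a\<bar> \<bar>b\<bar> = 1"
      by (simp_all del: max_less_iff_conj)
    then have "\<bar>a - 1\<bar> < 1 / 2" "\<bar>b\<bar> < 1 / 2" "max \<bar>a\<bar> \<bar>b\<bar> = 1"
      by (simp_all only: max_less_iff_conj)
    then have "a = 1" by (auto simp: max_def split: if_splits abs_split)
    then show "linf2_norm (a *\<^sub>R (1, 1 / 2) + (b * 1) *\<^sub>R (0, 1)) \<le> 1"
      using \<open>\<bar>b\<bar> < 1 / 2\<close> by auto
  qed auto
  then show ?thesis unfolding weak_cpp_def by blast
qed

lemma not_weak_cpp_linf2_e1_diag: "\<not> weak_cpp linf2_norm linf2_norm (1, 0) (1, 1)"
proof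
  assume "weak_cpp linf2_norm linf2_norm (1, 0) (1, 1)"
  then obtain r m z w where "r > 0" "m > 0"
    and z: "bj_orth linf2_norm (1, 0) z" "linf2_norm z = 1"
    and w: "linf2_norm w = 1"
    and bound: "\<And>a b. linf2_norm (a *\<^sub>R (1, 0) + b *\<^sub>R z - (1, 0)) < r \<Longrightarrow>
      linf2_norm (a *\<^sub>R (1, 0) + b *\<^sub>R z) = 1 \<Longrightarrow>
      linf2_norm (a *\<^sub>R (1, 1) + (b * m) *\<^sub>R w) \<le> 1"
    unfolding weak_cpp_def weak_cpp_const_def by blast
  obtain w1 w2 where w12: "w = (w1, w2)" by (cases w)
  have "fst z = 0" "\<bar>snd z\<bar> \<le> 1" using bj_orth_linf2_e1D[OF z(1)] z(2) by (cases z; simp)+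
  define t where "t = min r 1 / 2"
  have t: "0 < t" "t < r" "t \<le> 1 / 2" using \<open>r > 0\<close> unfolding t_def by auto
  \<comment> \<open>any small step along \<open>z = (0, \<plusminus>1)\<close> stays on the sphere; we pick its sign so that
    \<open>(1,1)\<close> is pushed outward along a nonzero coordinate \<open>v\<close> of \<open>w\<close>\<close>
  define v where "v = (if w1 \<noteq> 0 then w1 else w2)"
  have "v \<noteq> 0" "\<bar>v\<bar> \<le> 1" using w w12 unfolding v_def by auto
  define b where "b = t * v"
  have "\<bar>b * snd z\<bar> \<le> t"
    using \<open>\<bar>v\<bar> \<le> 1\<close> \<open>\<bar>snd z\<bar> \<le> 1\<close> t unfolding b_def
    by (simp add: abs_mult mult_le_one)
  then have "linf2_norm (1 *\<^sub>R (1, 0) + b *\<^sub>R z - (1, 0)) < r"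
    "linf2_norm (1 *\<^sub>R (1, 0) + b *\<^sub>R z) = 1"
    using \<open>fst z = 0\<close> t by (cases z, simp_all)+
  then have "linf2_norm (1 *\<^sub>R (1, 1) + (b * m) *\<^sub>R w) \<le> 1" by (rule bound)
  then have "\<bar>1 + b * m * v\<bar> \<le> 1" using w12 unfolding v_def by auto
  moreover have "b * m * v = t * m * v\<^sup>2" unfolding b_def by (simp add: power2_eq_square)
  moreover have "t * m * v\<^sup>2 > 0" using t \<open>m > 0\<close> \<open>v \<noteq> 0\<close> by simp
  ultimately show False by linarith
qed

lemma cpp_linf2_diag_e1: "cpp linf2_norm linf2_norm (1, 1) (1, 0)"
proof -
  have "cpp_const linf2_norm linf2_norm (1, 1) (1, 0) (1 / 2) 1"
    unfolding cpp_const_def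
  proof (intro conjI allI impI)
    fix z w :: "real \<times> real" and a b :: real
    assume zw: "bj_orth linf2_norm (1, 1) z \<and> linf2_norm z = 1 \<and>
      bj_orth linf2_norm (1, 0) w \<and> linf2_norm w = 1"
      and ab: "linf2_norm (a *\<^sub>R (1, 1) + b *\<^sub>R z - (1, 1)) < 1 / 2 \<and>
        linf2_norm (a *\<^sub>R (1, 1) + b *\<^sub>R z) = 1"
    obtain z1 z2 where z: "z = (z1, z2)" by (cases z)
    obtain w2 where w: "w = (0, w2)" "\<bar>w2\<bar> = 1"
      using zw bj_orth_linf2_e1D[of w] by (cases w) auto
    define p where "p = b * z1"
    define q where "q = b * z2"
    have "p * q \<le> 0"
      using bj_orth_linf2_diagD[of z] zw z mult_nonneg_nonpos[of "b * b" "z1 * z2"]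
      unfolding p_def q_def by (simp add: algebra_simps)
    have "max \<bar>a + p - 1\<bar> \<bar>a + q - 1\<bar> < 1 / 2" "max \<bar>a + p\<bar> \<bar>a + q\<bar> = 1"
      using ab z unfolding p_def q_def by (simp_all add: algebra_simps del: max_less_iff_conj)
    then have "\<bar>a + p - 1\<bar> < 1 / 2" "\<bar>a + q - 1\<bar> < 1 / 2" "\<bar>a + p\<bar> \<le> 1" "\<bar>a + q\<bar> \<le> 1"
      by (simp_all only: max_less_iff_conj)
    \<comment> \<open>\<open>p\<close> and \<open>q\<close> have opposite signs and differ by less than \<open>1\<close>\<close>
    then have "\<bar>a\<bar> \<le> 1" "\<bar>p\<bar> \<le> 1" "\<bar>q\<bar> \<le> 1"
      using \<open>p * q \<le> 0\<close> by (auto simp: mult_le_0_iff)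
    moreover have "\<bar>z1\<bar> = 1 \<or> \<bar>z2\<bar> = 1" using zw z by (auto simp: max_def split: if_splits)
    ultimately have "\<bar>b\<bar> \<le> 1" unfolding p_def q_def by (auto simp: abs_mult)
    then show "linf2_norm (a *\<^sub>R (1, 0) + (b * 1) *\<^sub>R w) \<le> 1"
      using \<open>\<bar>a\<bar> \<le> 1\<close> w by (simp add: abs_mult)
  qed auto
  then show ?thesis unfolding cpp_def by blast
qed

lemma not_extreme_point_linf2_e1: "\<not> (1, 0) extreme_point_of {p. linf2_norm p \<le> 1}"
  by (rule not_extreme_point_if_symmetric[of _ "(0, 1)"]) (auto simp: zero_prod_def)

lemma extreme_point_linf2_diag: "(1, 1) extreme_point_of {p. linf2_norm p \<le> 1}"
  unfolding extreme_point_of_def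
proof (intro conjI ballI)
  fix p q :: "real \<times> real"
  assume "p \<in> {p. linf2_norm p \<le> 1}" "q \<in> {p. linf2_norm p \<le> 1}"
  then have le: "fst p \<le> 1" "snd p \<le> 1" "fst q \<le> 1" "snd q \<le> 1"
    by (cases p, cases q, auto)+
  show "(1, 1) \<notin> open_segment p q"
  proof
    assume "(1, 1) \<in> open_segment p q"
    then obtain u where u: "p \<noteq> q" "0 < u" "u < 1" "(1, 1) = (1 - u) *\<^sub>R p + u *\<^sub>R q"
      unfolding in_segment by blast
    have "(1 - u) * (1 - fst p) + u * (1 - fst q) = 0" "(1 - u) * (1 - snd p) + u * (1 - snd q) = 0"
      using arg_cong[OF u(4), of fst] arg_cong[OF u(4), of snd] by (simp_all add: algebra_simps)
    moreover have "(1 - u) * (1 - fst p) \<ge> 0" "u * (1 - fst q) \<ge> 0"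
      "(1 - u) * (1 - snd p) \<ge> 0" "u * (1 - snd q) \<ge> 0"
      using u le by simp_all
    ultimately have "(1 - u) * (1 - fst p) = 0" "u * (1 - fst q) = 0"
      "(1 - u) * (1 - snd p) = 0" "u * (1 - snd q) = 0"
      by linarith+
    then have "fst p = 1" "fst q = 1" "snd p = 1" "snd q = 1" using u(2,3) by simp_all
    then show False using u(1) by (simp add: prod_eq_iff)
  qed
qed simp

theorem mainTheorem1:
  fixes dummyX :: "'a::banach" and dummyY :: "'b::banach"
    and dummyH :: "'h::{real_inner, complete_space}"
  assumes "dim_gt_one TYPE('a)" and "dim_gt_one TYPE('b)" and "dim_gt_one TYPE('h)"
  shows
    \<comment> \<open>(i)\<close>
    "(\<forall>(x::'a) (y::'b). norm x = 1 \<and> norm y = 1 \<and> cpp norm norm x y \<longrightarrow> weak_cpp norm norm x y)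
     \<and> weak_cpp linf2_norm linf2_norm (1, 1) (1, -1)
     \<and> \<not> cpp linf2_norm linf2_norm (1, 1) (1, -1)
     \<comment> \<open>(ii)\<close>
     \<and> (\<forall>(x::'h) (y::'h). norm x = 1 \<and> norm y = 1 \<longrightarrow>
          cpp norm norm x y \<and> (\<forall>r>0. cpp_const norm norm x y r 1))
     \<comment> \<open>(iii)\<close>
     \<and> (\<forall>x :: 'a. norm x = 1 \<longrightarrow> weak_cpp norm norm x x)
     \<and> \<not> cpp linf2_norm linf2_norm (1, 1) (1, 1)
     \<comment> \<open>(iv)\<close>
     \<and> weak_cpp linf2_norm linf2_norm (1, 0) (1, 1/2)
     \<and> \<not> weak_cpp linf2_norm linf2_norm (1, 0) (1, 1)
     \<comment> \<open>(v)\<close>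
     \<and> (\<forall>(x::'a) (y::'b) r0 m0 r m. norm x = 1 \<and> norm y = 1 \<and>
          0 < r \<and> r \<le> r0 \<and> 0 < m \<and> m \<le> m0 \<longrightarrow>
          (weak_cpp_const norm norm x y r0 m0 \<longrightarrow> weak_cpp_const norm norm x y r m) \<and>
          (cpp_const norm norm x y r0 m0 \<longrightarrow> cpp_const norm norm x y r m))
     \<comment> \<open>(vi)\<close>
     \<and> (\<forall>(x::'a) (y::'b). norm x = 1 \<and> norm y = 1 \<and> cpp norm norm x y \<and>
          \<not> x extreme_point_of cball 0 1 \<longrightarrow> \<not> y extreme_point_of cball 0 1)
     \<and> cpp linf2_norm linf2_norm (1, 1) (1, 0)
     \<and> \<not> (1, 0) extreme_point_of {p. linf2_norm p \<le> 1}
     \<and> (1, 1) extreme_point_of {p. linf2_norm p \<le> 1}"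
proof (intro conjI allI impI)
  show "weak_cpp norm norm x y" if "norm x = 1 \<and> norm y = 1 \<and> cpp norm norm x y"
    for x :: 'a and y :: 'b
    using that assms weak_cpp_if_cpp by blast
  show "cpp_const norm norm x y r 1" if "norm x = 1 \<and> norm y = 1" "r > 0" for x y :: 'h and r
    using that cpp_const_inner_space by blast
  then show "cpp norm norm x y" if "norm x = 1 \<and> norm y = 1" for x y :: 'h
    using that zero_less_one unfolding cpp_def by blast
  show "weak_cpp norm norm x x" if "norm x = 1" for x :: 'a
    using that assms(1) by (rule weak_cpp_self)
  show "\<not> cpp linf2_norm linf2_norm (1, 1) (1, -1)" "\<not> cpp linf2_norm linf2_norm (1, 1) (1, 1)"
    using not_cpp_linf2_diag[of "-1"] not_cpp_linf2_diag[of 1] by simp_all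
  show "weak_cpp_const norm norm x y r m"
    if "norm x = 1 \<and> norm y = 1 \<and> 0 < r \<and> r \<le> r0 \<and> 0 < m \<and> m \<le> m0"
      and "weak_cpp_const norm norm x y r0 m0" for x :: 'a and y :: 'b and r0 m0 r m
    using that weak_cpp_const_mono by blast
  show "cpp_const norm norm x y r m"
    if "norm x = 1 \<and> norm y = 1 \<and> 0 < r \<and> r \<le> r0 \<and> 0 < m \<and> m \<le> m0"
      and "cpp_const norm norm x y r0 m0" for x :: 'a and y :: 'b and r0 m0 r m
    using that cpp_const_mono by blast
  show "\<not> y extreme_point_of cball 0 1"
    if "norm x = 1 \<and> norm y = 1 \<and> cpp norm norm x y \<and> \<not> x extreme_point_of cball 0 1"
    for x :: 'a and y :: 'b
    using that assms(2) not_extreme_point_if_cpp by blast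
qed (fact weak_cpp_linf2_diag_antidiag weak_cpp_linf2_e1_half not_weak_cpp_linf2_e1_diag
  cpp_linf2_diag_e1 not_extreme_point_linf2_e1 extreme_point_linf2_diag)+

end
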